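(* Fix $s\in\mathbb N$ with $s\ge2$, positive integers $y_1,\dots,y_s$, and a polynomial $p\in\mathbb R[x_1,\dots,x_s]$ of degree $q$. For $\eta\in\mathbb N$ with $\eta\ge\sum_{i=1}^s y_i$ and distinct reals $w_1,\dots,w_s$, $$\sum_{\substack{x_1+\dots+x_s=\eta\\ x_i\ge y_i}} p(x_1,\dots,x_s)\,w_1^{x_1}\cdots w_s^{x_s}=\frac{\sum_{l=1}^s w_l^{\eta+2-\sum_{i=1}^s y_i}f_{l,\eta}(w_1,\dots,w_s)}{\left(\prod_{1\le i<j\le s}(w_i-w_j)\right)^{2^q}},$$ where each $f_{l,\eta}\in\mathbb R[\eta][w_1,\dots,w_s]$ is homogeneous in $w_1,\dots,w_s$ of degree $2^q\binom s2+\left(\sum_{i=1}^s y_i\right)-2$, and its coefficients are polynomials in $\eta$ of degree at most $q$.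
   Context: The sum runs over integer tuples $(x_1,\dots,x_s)$ with $x_i\ge y_i$ for all $i$. *)

theory Defs
  imports "HOL-Library.Poly_Mapping" "HOL-Computational_Algebra.Polynomial"
begin

(* Multivariate polynomials in variables x_0, x_1, ... are represented as finitely
   supported maps from exponent vectors (monomials, nat \<Rightarrow>\<^sub>0 nat) to coefficients. *)

definition mono_deg :: "(nat \<Rightarrow>\<^sub>0 nat) \<Rightarrow> nat" where
  "mono_deg \<alpha> = (\<Sum>i\<in>Poly_Mapping.keys \<alpha>. Poly_Mapping.lookup \<alpha> i)"

definition mono_eval :: "(nat \<Rightarrow>\<^sub>0 nat) \<Rightarrow> (nat \<Rightarrow> real) \<Rightarrow> real" where
  "mono_eval \<alpha> x = (\<Prod>i\<in>Poly_Mapping.keys \<alpha>. x i ^ Poly_Mapping.lookup \<alpha> i)"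

definition mpoly_eval :: "((nat \<Rightarrow>\<^sub>0 nat) \<Rightarrow>\<^sub>0 real) \<Rightarrow> (nat \<Rightarrow> real) \<Rightarrow> real" where
  "mpoly_eval p x = (\<Sum>\<alpha>\<in>Poly_Mapping.keys p. Poly_Mapping.lookup p \<alpha> * mono_eval \<alpha> x)"

definition vars_below :: "((nat \<Rightarrow>\<^sub>0 nat) \<Rightarrow>\<^sub>0 'a::zero) \<Rightarrow> nat \<Rightarrow> bool" where
  "vars_below p s \<longleftrightarrow> (\<forall>\<alpha>\<in>Poly_Mapping.keys p. Poly_Mapping.keys \<alpha> \<subseteq> {..<s})"

definition total_degree :: "((nat \<Rightarrow>\<^sub>0 nat) \<Rightarrow>\<^sub>0 'a::zero) \<Rightarrow> nat" where
  "total_degree p = Max (insert 0 (mono_deg ` Poly_Mapping.keys p))"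

(* polynomials in w_0,...,w_{s-1} whose coefficients are univariate polynomials in eta,
   i.e. elements of R[eta][w]; evaluation at a given eta and w *)
definition eta_mpoly_eval :: "((nat \<Rightarrow>\<^sub>0 nat) \<Rightarrow>\<^sub>0 real poly) \<Rightarrow> real \<Rightarrow> (nat \<Rightarrow> real) \<Rightarrow> real" where
  "eta_mpoly_eval f eta w = (\<Sum>\<alpha>\<in>Poly_Mapping.keys f. poly (Poly_Mapping.lookup f \<alpha>) eta * mono_eval \<alpha> w)"

definition homogeneous_of :: "((nat \<Rightarrow>\<^sub>0 nat) \<Rightarrow>\<^sub>0 'a::zero) \<Rightarrow> nat \<Rightarrow> bool" where
  "homogeneous_of f d \<longleftrightarrow> (\<forall>\<alpha>\<in>Poly_Mapping.keys f. mono_deg \<alpha> = d)"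

end

theory Submission
  imports Defs
begin

text \<open>
  For p = 1 the sum is \<open>w\<^sub>1^y\<^sub>1 \<cdots> w\<^sub>s^y\<^sub>s\<close> times the complete homogeneous polynomial
  \<open>h\<^sub>m(w)\<close>, \<open>m = \<eta> - \<Sum>y\<^sub>i\<close>, and the Lagrange interpolation identity
  \<open>h\<^sub>m(w) = \<Sum>\<^sub>l w\<^sub>l^(m+s-1) / \<Prod>\<^sub>i\<^sub>\<noteq>\<^sub>l (w\<^sub>l - w\<^sub>i)\<close> shows that multiplying by the Vandermonde
  product V clears all denominators. Multiplying the summand by \<open>x\<^sub>k\<close> amounts to applying
  the Euler operator \<open>w\<^sub>k \<partial>/\<partial>w\<^sub>k\<close>; applied to an identity
  \<open>S \<cdot> V^N = \<Sum>\<^sub>l w\<^sub>l^(\<eta>+2-\<Sum>y\<^sub>i) F\<^sub>l\<close> and multiplied by V, it yields an identity of the same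
  shape with \<open>N + 1\<close>, where the coefficients gain one degree in \<open>\<eta>\<close> from differentiating
  \<open>w\<^sub>k^(\<eta>+2-\<Sum>y\<^sub>i)\<close>. A monomial of degree n thus needs \<open>V^(n+1)\<close>, and \<open>n + 1 \<le> 2^q\<close>.
\<close>

lemma mono_eval_superset:
  assumes "finite K" "Poly_Mapping.keys a \<subseteq> K"
  shows "mono_eval a x = (\<Prod>i\<in>K. x i ^ Poly_Mapping.lookup a i)"
  unfolding mono_eval_def
  by (rule prod.mono_neutral_left[OF assms]) (auto simp: in_keys_iff)

lemma mono_deg_superset:
  assumes "finite K" "Poly_Mapping.keys a \<subseteq> K"
  shows "mono_deg a = (\<Sum>i\<in>K. Poly_Mapping.lookup a i)"
  unfolding mono_deg_def
  by (rule sum.mono_neutral_left[OF assms]) (auto simp: in_keys_iff)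

lemma mono_eval_add: "mono_eval (a + b) x = mono_eval a x * mono_eval b x"
proof -
  let ?K = "Poly_Mapping.keys a \<union> Poly_Mapping.keys b"
  have "mono_eval (a + b) x = (\<Prod>i\<in>?K. x i ^ Poly_Mapping.lookup (a + b) i)"
    by (rule mono_eval_superset) (auto simp: keys_add)
  also have "\<dots> = (\<Prod>i\<in>?K. x i ^ Poly_Mapping.lookup a i) * (\<Prod>i\<in>?K. x i ^ Poly_Mapping.lookup b i)"
    by (simp add: lookup_add power_add prod.distrib)
  also have "\<dots> = mono_eval a x * mono_eval b x"
    by (subst (1 2) mono_eval_superset[of ?K]) auto
  finally show ?thesis .
qed

lemma mono_deg_add: "mono_deg (a + b) = mono_deg a + mono_deg b"
proof -
  let ?K = "Poly_Mapping.keys a \<union> Poly_Mapping.keys b"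
  have "mono_deg (a + b) = (\<Sum>i\<in>?K. Poly_Mapping.lookup (a + b) i)"
    by (rule mono_deg_superset) (auto simp: keys_add)
  also have "\<dots> = (\<Sum>i\<in>?K. Poly_Mapping.lookup a i) + (\<Sum>i\<in>?K. Poly_Mapping.lookup b i)"
    by (simp add: lookup_add sum.distrib)
  also have "\<dots> = mono_deg a + mono_deg b"
    by (subst (1 2) mono_deg_superset[of ?K]) auto
  finally show ?thesis .
qed

lemma mono_eval_zero [simp]: "mono_eval 0 x = 1"
  by (simp add: mono_eval_def)

lemma mono_deg_zero [simp]: "mono_deg 0 = 0"
  by (simp add: mono_deg_def)

lemma mono_eval_single [simp]: "mono_eval (Poly_Mapping.single i n) x = x i ^ n"
  by (simp add: mono_eval_def)

lemma mono_deg_single [simp]: "mono_deg (Poly_Mapping.single i n) = n"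
  by (simp add: mono_deg_def)

lemma mono_deg_le_total_degree: "\<alpha> \<in> Poly_Mapping.keys p \<Longrightarrow> mono_deg \<alpha> \<le> total_degree p"
  unfolding total_degree_def by (intro Max_ge) auto

lemma eta_mpoly_eval_superset:
  assumes "finite K" "Poly_Mapping.keys f \<subseteq> K"
  shows "eta_mpoly_eval f t w = (\<Sum>a\<in>K. poly (Poly_Mapping.lookup f a) t * mono_eval a w)"
  unfolding eta_mpoly_eval_def
  by (rule sum.mono_neutral_left[OF assms]) (auto simp: in_keys_iff)

lemma eta_mpoly_eval_add:
  "eta_mpoly_eval (f + g) t w = eta_mpoly_eval f t w + eta_mpoly_eval g t w"
proof -
  let ?K = "Poly_Mapping.keys f \<union> Poly_Mapping.keys g"
  have "eta_mpoly_eval (f + g) t w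
      = (\<Sum>a\<in>?K. poly (Poly_Mapping.lookup (f + g) a) t * mono_eval a w)"
    by (rule eta_mpoly_eval_superset) (auto simp: keys_add)
  also have "\<dots> = (\<Sum>a\<in>?K. poly (Poly_Mapping.lookup f a) t * mono_eval a w)
      + (\<Sum>a\<in>?K. poly (Poly_Mapping.lookup g a) t * mono_eval a w)"
    by (simp add: lookup_add sum.distrib distrib_right)
  also have "\<dots> = eta_mpoly_eval f t w + eta_mpoly_eval g t w"
    by (subst (1 2) eta_mpoly_eval_superset[of ?K]) auto
  finally show ?thesis .
qed

lemma eta_mpoly_eval_single:
  "eta_mpoly_eval (Poly_Mapping.single a c) t w = poly c t * mono_eval a w"
  by (simp add: eta_mpoly_eval_def)


subsection \<open>Polynomials in w with coefficients in \<open>\<real>[\<eta>]\<close> as lists of terms\<close>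

definition terms_eval :: "(real poly \<times> (nat \<Rightarrow>\<^sub>0 nat)) list \<Rightarrow> real \<Rightarrow> (nat \<Rightarrow> real) \<Rightarrow> real" where
  "terms_eval L t w = (\<Sum>(c, a)\<leftarrow>L. poly c t * mono_eval a w)"

lemma terms_eval_Nil [simp]: "terms_eval [] t w = 0"
  by (simp add: terms_eval_def)

lemma terms_eval_Cons [simp]:
  "terms_eval ((c, a) # L) t w = poly c t * mono_eval a w + terms_eval L t w"
  by (simp add: terms_eval_def)

lemma terms_eval_append: "terms_eval (L @ M) t w = terms_eval L t w + terms_eval M t w"
  by (simp add: terms_eval_def)

definition terms_mult ::
  "(real poly \<times> (nat \<Rightarrow>\<^sub>0 nat)) list \<Rightarrow> (real poly \<times> (nat \<Rightarrow>\<^sub>0 nat)) list \<Rightarrow> (real poly \<times> (nat \<Rightarrow>\<^sub>0 nat)) list"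
  where "terms_mult L M = concat (map (\<lambda>(c, a). map (\<lambda>(c', b). (c * c', a + b)) M) L)"

lemma terms_eval_mult: "terms_eval (terms_mult L M) t w = terms_eval L t w * terms_eval M t w"
proof (induction L)
  case Nil
  then show ?case by (simp add: terms_mult_def)
next
  case (Cons p L)
  obtain c a where p: "p = (c, a)" by (cases p)
  have "terms_eval (map (\<lambda>(c', b). (c * c', a + b)) M) t w = poly c t * mono_eval a w * terms_eval M t w"
    by (induction M) (auto simp: mono_eval_add algebra_simps)
  with Cons show ?case
    by (simp add: terms_mult_def p terms_eval_append distrib_right)
qed

definition terms_mpoly :: "(real poly \<times> (nat \<Rightarrow>\<^sub>0 nat)) list \<Rightarrow> (nat \<Rightarrow>\<^sub>0 nat) \<Rightarrow>\<^sub>0 real poly" where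
  "terms_mpoly L = (\<Sum>(c, a)\<leftarrow>L. Poly_Mapping.single a c)"

lemma terms_mpoly_Cons: "terms_mpoly ((c, a) # L) = Poly_Mapping.single a c + terms_mpoly L"
  by (simp add: terms_mpoly_def)

lemma keys_terms_mpoly: "Poly_Mapping.keys (terms_mpoly L) \<subseteq> snd ` set L"
proof (induction L)
  case Nil
  then show ?case by (simp add: terms_mpoly_def)
next
  case (Cons p L)
  then show ?case
    using keys_add[of "Poly_Mapping.single (snd p) (fst p)" "terms_mpoly L"]
    by (cases p) (auto simp: terms_mpoly_Cons split: if_splits)
qed

lemma eta_mpoly_eval_terms_mpoly: "eta_mpoly_eval (terms_mpoly L) t w = terms_eval L t w"
proof (induction L)
  case Nil
  then show ?case by (simp add: terms_mpoly_def eta_mpoly_eval_def)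
next
  case (Cons p L)
  then show ?case
    by (cases p) (simp add: terms_mpoly_Cons eta_mpoly_eval_add eta_mpoly_eval_single)
qed

lemma degree_lookup_terms_mpoly:
  assumes "\<forall>(c, a)\<in>set L. degree c \<le> e"
  shows "degree (Poly_Mapping.lookup (terms_mpoly L) b) \<le> e"
  using assms
proof (induction L)
  case Nil
  then show ?case by (simp add: terms_mpoly_def)
next
  case (Cons p L)
  then show ?case
    by (cases p) (auto simp: terms_mpoly_Cons lookup_add lookup_single when_def intro!: degree_add_le)
qed

text \<open>
  \<open>hom_eta_poly s d e \<Phi>\<close>: \<open>\<Phi>\<close> is an element of \<open>\<real>[t][w\<^sub>0, \<dots>, w\<^sub>s\<^sub>-\<^sub>1]\<close>, homogeneous of
  degree d in w with coefficients of degree at most e in t. It is represented by a list of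
  terms \<open>c(t) w^a\<close>, which makes products easy to form; \<open>hom_eta_poly_imp_mpoly\<close> converts
  back to a finitely supported coefficient map.
\<close>

definition hom_eta_poly :: "nat \<Rightarrow> nat \<Rightarrow> nat \<Rightarrow> (real \<Rightarrow> (nat \<Rightarrow> real) \<Rightarrow> real) \<Rightarrow> bool" where
  "hom_eta_poly s d e \<Phi> \<longleftrightarrow> (\<exists>L. (\<forall>(c, a)\<in>set L.
      Poly_Mapping.keys a \<subseteq> {..<s} \<and> mono_deg a = d \<and> degree c \<le> e) \<and> \<Phi> = terms_eval L)"

lemma hom_eta_polyE:
  assumes "hom_eta_poly s d e \<Phi>"
  obtains L where "\<forall>(c, a)\<in>set L. Poly_Mapping.keys a \<subseteq> {..<s} \<and> mono_deg a = d \<and> degree c \<le> e"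
    and "\<Phi> = terms_eval L"
  using assms unfolding hom_eta_poly_def by blast

lemma hom_eta_poly_zero: "hom_eta_poly s d e (\<lambda>t w. 0)"
  unfolding hom_eta_poly_def by (rule exI[of _ "[]"]) (simp add: fun_eq_iff)

lemma hom_eta_poly_mono: "hom_eta_poly s d e \<Phi> \<Longrightarrow> e \<le> e' \<Longrightarrow> hom_eta_poly s d e' \<Phi>"
  unfolding hom_eta_poly_def by fastforce

lemma hom_eta_poly_add:
  assumes "hom_eta_poly s d e \<Phi>" "hom_eta_poly s d e \<Psi>"
  shows "hom_eta_poly s d e (\<lambda>t w. \<Phi> t w + \<Psi> t w)"
proof -
  obtain L where L: "\<forall>(c, a)\<in>set L. Poly_Mapping.keys a \<subseteq> {..<s} \<and> mono_deg a = d \<and> degree c \<le> e"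
    "\<Phi> = terms_eval L"
    using assms(1) by (rule hom_eta_polyE)
  obtain M where M: "\<forall>(c, a)\<in>set M. Poly_Mapping.keys a \<subseteq> {..<s} \<and> mono_deg a = d \<and> degree c \<le> e"
    "\<Psi> = terms_eval M"
    using assms(2) by (rule hom_eta_polyE)
  show ?thesis
    unfolding hom_eta_poly_def using L M
    by (intro exI[of _ "L @ M"]) (auto simp: terms_eval_append fun_eq_iff)
qed

lemma hom_eta_poly_const: "hom_eta_poly s 0 (degree c) (\<lambda>t w. poly c t)"
  unfolding hom_eta_poly_def by (rule exI[of _ "[(c, 0)]"]) (simp add: fun_eq_iff)

lemma hom_eta_poly_var: "i < s \<Longrightarrow> hom_eta_poly s 1 0 (\<lambda>t w. w i)"
  unfolding hom_eta_poly_def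
  by (rule exI[of _ "[(1, Poly_Mapping.single i 1)]"]) (simp add: fun_eq_iff)

lemma hom_eta_poly_mult:
  assumes "hom_eta_poly s d e \<Phi>" "hom_eta_poly s d' e' \<Psi>"
  shows "hom_eta_poly s (d + d') (e + e') (\<lambda>t w. \<Phi> t w * \<Psi> t w)"
proof -
  obtain L where L: "\<forall>(c, a)\<in>set L. Poly_Mapping.keys a \<subseteq> {..<s} \<and> mono_deg a = d \<and> degree c \<le> e"
    "\<Phi> = terms_eval L"
    using assms(1) by (rule hom_eta_polyE)
  obtain M where M: "\<forall>(c, a)\<in>set M. Poly_Mapping.keys a \<subseteq> {..<s} \<and> mono_deg a = d' \<and> degree c \<le> e'"
    "\<Psi> = terms_eval M"
    using assms(2) by (rule hom_eta_polyE)
  have "\<forall>(c, a)\<in>set (terms_mult L M).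
      Poly_Mapping.keys a \<subseteq> {..<s} \<and> mono_deg a = d + d' \<and> degree c \<le> e + e'"
  proof (clarsimp simp: terms_mult_def)
    fix c a c' b
    assume "(c, a) \<in> set L" "(c', b) \<in> set M"
    then have "Poly_Mapping.keys a \<subseteq> {..<s}" "mono_deg a = d" "degree c \<le> e"
      "Poly_Mapping.keys b \<subseteq> {..<s}" "mono_deg b = d'" "degree c' \<le> e'"
      using L(1) M(1) by auto
    then show "Poly_Mapping.keys (a + b) \<subseteq> {..<s} \<and> mono_deg (a + b) = d + d'
        \<and> degree (c * c') \<le> e + e'"
      using keys_add[of a b] degree_mult_le[of c c'] by (auto simp: mono_deg_add)
  qed
  then show ?thesis
    unfolding hom_eta_poly_def using L(2) M(2)
    by (intro exI[of _ "terms_mult L M"]) (simp add: terms_eval_mult fun_eq_iff)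
qed

lemma hom_eta_poly_cmult: "hom_eta_poly s d e \<Phi> \<Longrightarrow> hom_eta_poly s d e (\<lambda>t w. r * \<Phi> t w)"
  using hom_eta_poly_mult[OF hom_eta_poly_const[of s "[:r:]"]] by simp

lemma hom_eta_poly_diff:
  "hom_eta_poly s d e \<Phi> \<Longrightarrow> hom_eta_poly s d e \<Psi> \<Longrightarrow> hom_eta_poly s d e (\<lambda>t w. \<Phi> t w - \<Psi> t w)"
  using hom_eta_poly_add[of s d e \<Phi> "\<lambda>t w. (-1) * \<Psi> t w"] hom_eta_poly_cmult[of s d e \<Psi> "-1"]
  by simp

lemma hom_eta_poly_prod:
  "finite I \<Longrightarrow> (\<And>i. i \<in> I \<Longrightarrow> hom_eta_poly s (d i) (e i) (\<Phi> i))
    \<Longrightarrow> hom_eta_poly s (\<Sum>i\<in>I. d i) (\<Sum>i\<in>I. e i) (\<lambda>t w. \<Prod>i\<in>I. \<Phi> i t w)"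
proof (induction I rule: finite_induct)
  case empty
  then show ?case using hom_eta_poly_const[of s 1] by simp
next
  case (insert x F)
  then show ?case using hom_eta_poly_mult[of s "d x" "e x" "\<Phi> x"] by simp
qed

lemma hom_eta_poly_power:
  "hom_eta_poly s d e \<Phi> \<Longrightarrow> hom_eta_poly s (n * d) (n * e) (\<lambda>t w. \<Phi> t w ^ n)"
  using hom_eta_poly_prod[of "{..<n}" s "\<lambda>_. d" "\<lambda>_. e" "\<lambda>_. \<Phi>"] by simp

lemma hom_eta_poly_var_power: "i < s \<Longrightarrow> hom_eta_poly s n 0 (\<lambda>t w. w i ^ n)"
  using hom_eta_poly_power[OF hom_eta_poly_var, of i s n] by simp

lemma hom_eta_poly_imp_mpoly:
  assumes "hom_eta_poly s d e \<Phi>"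
  obtains f where "vars_below f s" "homogeneous_of f d"
    "\<forall>a\<in>Poly_Mapping.keys f. degree (Poly_Mapping.lookup f a) \<le> e"
    "\<Phi> = eta_mpoly_eval f"
proof -
  obtain L where L: "\<forall>(c, a)\<in>set L. Poly_Mapping.keys a \<subseteq> {..<s} \<and> mono_deg a = d \<and> degree c \<le> e"
    "\<Phi> = terms_eval L"
    using assms by (rule hom_eta_polyE)
  have keys: "Poly_Mapping.keys (terms_mpoly L) \<subseteq> snd ` set L"
    by (rule keys_terms_mpoly)
  show ?thesis
  proof
    show "vars_below (terms_mpoly L) s"
      unfolding vars_below_def using keys L(1) by fastforce
    show "homogeneous_of (terms_mpoly L) d"
      unfolding homogeneous_of_def using keys L(1) by fastforce
    show "\<forall>a\<in>Poly_Mapping.keys (terms_mpoly L). degree (Poly_Mapping.lookup (terms_mpoly L) a) \<le> e"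
      using degree_lookup_terms_mpoly L(1) by (auto simp: case_prod_beta)
    show "\<Phi> = eta_mpoly_eval (terms_mpoly L)"
      using L(2) by (simp add: eta_mpoly_eval_terms_mpoly fun_eq_iff)
  qed
qed


subsection \<open>The Euler operator \<open>w\<^sub>k \<partial>/\<partial>w\<^sub>k\<close>\<close>

definition has_euler_deriv :: "((nat \<Rightarrow> real) \<Rightarrow> real) \<Rightarrow> nat \<Rightarrow> ((nat \<Rightarrow> real) \<Rightarrow> real) \<Rightarrow> bool" where
  "has_euler_deriv f k g \<longleftrightarrow>
     (\<forall>w. \<exists>D. ((\<lambda>u. f (w(k := u))) has_real_derivative D) (at (w k)) \<and> w k * D = g w)"

lemma has_euler_derivE:
  assumes "has_euler_deriv f k g"
  obtains D where "((\<lambda>u. f (w(k := u))) has_real_derivative D) (at (w k))" "w k * D = g w"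
  using assms unfolding has_euler_deriv_def by blast

lemma has_euler_deriv_const: "has_euler_deriv (\<lambda>w. c) k (\<lambda>w. 0)"
  unfolding has_euler_deriv_def by (auto intro!: exI[of _ 0])

lemma has_euler_deriv_add:
  assumes "has_euler_deriv f k F" "has_euler_deriv g k G"
  shows "has_euler_deriv (\<lambda>w. f w + g w) k (\<lambda>w. F w + G w)"
  unfolding has_euler_deriv_def
proof
  fix w
  obtain D where D: "((\<lambda>u. f (w(k := u))) has_real_derivative D) (at (w k))" "w k * D = F w"
    using assms(1) by (rule has_euler_derivE)
  obtain E where E: "((\<lambda>u. g (w(k := u))) has_real_derivative E) (at (w k))" "w k * E = G w"
    using assms(2) by (rule has_euler_derivE)
  show "\<exists>D. ((\<lambda>u. f (w(k := u)) + g (w(k := u))) has_real_derivative D) (at (w k))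
      \<and> w k * D = F w + G w"
    using D E by (intro exI[of _ "D + E"]) (auto intro: DERIV_add simp: distrib_left)
qed

lemma has_euler_deriv_mult:
  assumes "has_euler_deriv f k F" "has_euler_deriv g k G"
  shows "has_euler_deriv (\<lambda>w. f w * g w) k (\<lambda>w. F w * g w + f w * G w)"
  unfolding has_euler_deriv_def
proof
  fix w
  obtain D where D: "((\<lambda>u. f (w(k := u))) has_real_derivative D) (at (w k))" "w k * D = F w"
    using assms(1) by (rule has_euler_derivE)
  obtain E where E: "((\<lambda>u. g (w(k := u))) has_real_derivative E) (at (w k))" "w k * E = G w"
    using assms(2) by (rule has_euler_derivE)
  show "\<exists>D. ((\<lambda>u. f (w(k := u)) * g (w(k := u))) has_real_derivative D) (at (w k))
      \<and> w k * D = F w * g w + f w * G w"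
  proof (intro exI conjI)
    show "((\<lambda>u. f (w(k := u)) * g (w(k := u))) has_real_derivative D * g w + E * f w) (at (w k))"
      using DERIV_mult[OF D(1) E(1)] by simp
    have "w k * (D * g w + E * f w) = (w k * D) * g w + f w * (w k * E)"
      by (simp add: algebra_simps)
    then show "w k * (D * g w + E * f w) = F w * g w + f w * G w"
      using D(2) E(2) by simp
  qed
qed

lemma has_euler_deriv_cmult:
  assumes "has_euler_deriv f k F"
  shows "has_euler_deriv (\<lambda>w. c * f w) k (\<lambda>w. c * F w)"
  unfolding has_euler_deriv_def
proof
  fix w
  obtain D where "((\<lambda>u. f (w(k := u))) has_real_derivative D) (at (w k))" "w k * D = F w"
    using assms by (rule has_euler_derivE)
  then show "\<exists>D. ((\<lambda>u. c * f (w(k := u))) has_real_derivative D) (at (w k)) \<and> w k * D = c * F w"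
    by (intro exI[of _ "c * D"]) (auto intro: DERIV_cmult)
qed

lemma has_euler_deriv_power:
  assumes "has_euler_deriv f k F"
  shows "has_euler_deriv (\<lambda>w. f w ^ n) k (\<lambda>w. real n * f w ^ (n - 1) * F w)"
  unfolding has_euler_deriv_def
proof
  fix w
  obtain D where D: "((\<lambda>u. f (w(k := u))) has_real_derivative D) (at (w k))" "w k * D = F w"
    using assms by (rule has_euler_derivE)
  show "\<exists>D. ((\<lambda>u. f (w(k := u)) ^ n) has_real_derivative D) (at (w k))
      \<and> w k * D = real n * f w ^ (n - 1) * F w"
  proof (intro exI conjI)
    show "((\<lambda>u. f (w(k := u)) ^ n) has_real_derivative real n * f w ^ (n - 1) * D) (at (w k))"
      using DERIV_power[OF D(1), of n] by (simp add: ac_simps)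
    have "w k * (real n * f w ^ (n - 1) * D) = real n * f w ^ (n - 1) * (w k * D)"
      by (simp add: ac_simps)
    then show "w k * (real n * f w ^ (n - 1) * D) = real n * f w ^ (n - 1) * F w"
      using D(2) by simp
  qed
qed

lemma has_euler_deriv_sum:
  assumes "\<And>i. i \<in> I \<Longrightarrow> has_euler_deriv (f i) k (F i)"
  shows "has_euler_deriv (\<lambda>w. \<Sum>i\<in>I. f i w) k (\<lambda>w. \<Sum>i\<in>I. F i w)"
  unfolding has_euler_deriv_def
proof
  fix w
  have "\<forall>i\<in>I. \<exists>D. ((\<lambda>u. f i (w(k := u))) has_real_derivative D) (at (w k)) \<and> w k * D = F i w"
    using assms unfolding has_euler_deriv_def by blast
  then obtain D where "\<forall>i\<in>I. ((\<lambda>u. f i (w(k := u))) has_real_derivative D i) (at (w k))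
      \<and> w k * D i = F i w"
    by (rule bchoice[THEN exE])
  then show "\<exists>D. ((\<lambda>u. \<Sum>i\<in>I. f i (w(k := u))) has_real_derivative D) (at (w k))
      \<and> w k * D = (\<Sum>i\<in>I. F i w)"
    by (intro exI[of _ "\<Sum>i\<in>I. D i"]) (auto intro: DERIV_sum simp: sum_distrib_left)
qed

lemma has_euler_deriv_prod_power:
  assumes "finite K" "k \<in> K"
  shows "has_euler_deriv (\<lambda>w. \<Prod>i\<in>K. w i ^ a i) k (\<lambda>w. real (a k) * (\<Prod>i\<in>K. w i ^ a i))"
  unfolding has_euler_deriv_def
proof
  fix w :: "nat \<Rightarrow> real"
  let ?R = "\<Prod>i\<in>K-{k}. w i ^ a i"
  have split: "(\<Prod>i\<in>K. (w(k := u)) i ^ a i) = u ^ a k * ?R" for u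
    using assms by (simp add: prod.remove)
  have "((\<lambda>u. u ^ a k * ?R) has_real_derivative real (a k) * w k ^ (a k - 1) * ?R) (at (w k))"
    by (auto intro!: derivative_eq_intros)
  moreover have "w k * (real (a k) * w k ^ (a k - 1) * ?R) = real (a k) * (\<Prod>i\<in>K. w i ^ a i)"
    using split[of "w k"] by (cases "a k") auto
  ultimately show "\<exists>D. ((\<lambda>u. \<Prod>i\<in>K. (w(k := u)) i ^ a i) has_real_derivative D) (at (w k))
      \<and> w k * D = real (a k) * (\<Prod>i\<in>K. w i ^ a i)"
    unfolding split by blast
qed

lemma has_euler_deriv_mono_eval:
  "has_euler_deriv (mono_eval a) k (\<lambda>w. real (Poly_Mapping.lookup a k) * mono_eval a w)"
proof -
  let ?K = "Poly_Mapping.keys a \<union> {k}"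
  have eq: "mono_eval a = (\<lambda>w. \<Prod>i\<in>?K. w i ^ Poly_Mapping.lookup a i)"
    by (rule ext, rule mono_eval_superset) auto
  show ?thesis
    unfolding eq by (rule has_euler_deriv_prod_power) auto
qed

lemma has_euler_deriv_var_power:
  "has_euler_deriv (\<lambda>w. w i ^ n) k (\<lambda>w. (if i = k then real n else 0) * w i ^ n)"
proof -
  have "mono_eval (Poly_Mapping.single i n) = (\<lambda>w. w i ^ n)"
    by (simp add: fun_eq_iff)
  then show ?thesis
    using has_euler_deriv_mono_eval[of "Poly_Mapping.single i n" k]
    by (cases "i = k") (auto simp: lookup_single)
qed

lemma has_euler_deriv_unique_on_open:
  assumes "has_euler_deriv f k F" "has_euler_deriv g k G"
    and "open U" "w k \<in> U" "\<And>u. u \<in> U \<Longrightarrow> f (w(k := u)) = g (w(k := u))"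
  shows "F w = G w"
proof -
  obtain D where D: "((\<lambda>u. f (w(k := u))) has_real_derivative D) (at (w k))" "w k * D = F w"
    using assms(1) by (rule has_euler_derivE)
  obtain E where E: "((\<lambda>u. g (w(k := u))) has_real_derivative E) (at (w k))" "w k * E = G w"
    using assms(2) by (rule has_euler_derivE)
  have "((\<lambda>u. g (w(k := u))) has_real_derivative D) (at (w k))"
    using assms(5) by (intro has_field_derivative_transform_within_open[OF D(1) assms(3,4)]) simp
  then have "D = E"
    using E(1) by (rule DERIV_unique)
  with D(2) E(2) show ?thesis by simp
qed

lemma hom_eta_poly_euler_deriv:
  assumes "hom_eta_poly s d e \<Phi>"
  obtains \<Psi> where "hom_eta_poly s d e \<Psi>" "\<And>t. has_euler_deriv (\<Phi> t) k (\<Psi> t)"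
proof -
  obtain L where L: "\<forall>(c, a)\<in>set L. Poly_Mapping.keys a \<subseteq> {..<s} \<and> mono_deg a = d \<and> degree c \<le> e"
    "\<Phi> = terms_eval L"
    using assms by (rule hom_eta_polyE)
  define scale where "scale = map (\<lambda>(c, a). (smult (real (Poly_Mapping.lookup a k)) c, a))"
  have "\<forall>(c, a)\<in>set (scale L). Poly_Mapping.keys a \<subseteq> {..<s} \<and> mono_deg a = d \<and> degree c \<le> e"
    using L(1) by (fastforce simp: scale_def intro: le_trans[OF degree_smult_le])
  then have "hom_eta_poly s d e (terms_eval (scale L))"
    unfolding hom_eta_poly_def by blast
  moreover have "has_euler_deriv (terms_eval M t) k (terms_eval (scale M) t)" for M t
  proof (induction M)
    case Nil
    then show ?case
      using has_euler_deriv_const[of 0 k] by (simp add: scale_def)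
  next
    case (Cons p M)
    obtain c a where p: "p = (c, a)" by (cases p)
    have "has_euler_deriv (\<lambda>w. poly c t * mono_eval a w + terms_eval M t w) k
        (\<lambda>w. poly c t * (real (Poly_Mapping.lookup a k) * mono_eval a w) + terms_eval (scale M) t w)"
      by (intro has_euler_deriv_add has_euler_deriv_cmult has_euler_deriv_mono_eval Cons.IH)
    then show ?case
      by (simp add: p scale_def mult_ac)
  qed
  ultimately show ?thesis
    using L(2) that by blast
qed


subsection \<open>Complete homogeneous polynomials and Lagrange sums\<close>

text \<open>Negative degrees are allowed (the polynomial is then 0), so that the recursion
  \<open>complete_hom_remove\<close> holds for every degree.\<close>

definition exponents :: "nat set \<Rightarrow> int \<Rightarrow> (nat \<Rightarrow> nat) set" where
  "exponents A m = {z. (\<forall>i. i \<notin> A \<longrightarrow> z i = 0) \<and> 0 \<le> m \<and> (\<Sum>i\<in>A. z i) = nat m}"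

definition complete_hom :: "nat set \<Rightarrow> int \<Rightarrow> (nat \<Rightarrow> real) \<Rightarrow> real" where
  "complete_hom A m w = (\<Sum>z\<in>exponents A m. \<Prod>i\<in>A. w i ^ z i)"

definition lagrange_sum :: "nat set \<Rightarrow> nat \<Rightarrow> (nat \<Rightarrow> real) \<Rightarrow> real" where
  "lagrange_sum A k w = (\<Sum>l\<in>A. w l ^ k / (\<Prod>i\<in>A-{l}. (w l - w i)))"

lemma finite_exponents:
  assumes "finite A"
  shows "finite (exponents A m)"
proof -
  have "z i \<le> nat m" if "z \<in> exponents A m" "i \<in> A" for z i
    using that assms member_le_sum[of i A z] by (auto simp: exponents_def)
  then have "exponents A m \<subseteq> {z. \<forall>i. (i \<in> A \<longrightarrow> z i \<in> {..nat m}) \<and> (i \<notin> A \<longrightarrow> z i = 0)}"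
    by (auto simp: exponents_def)
  moreover have "finite {z. \<forall>i. (i \<in> A \<longrightarrow> z i \<in> {..nat m}) \<and> (i \<notin> A \<longrightarrow> z i = (0::nat))}"
    using assms by (intro finite_set_of_finite_funs) auto
  ultimately show ?thesis
    by (rule finite_subset)
qed

lemma exponents_of_nat:
  "exponents A (int n) = {z. (\<forall>i. i \<notin> A \<longrightarrow> z i = 0) \<and> (\<Sum>i\<in>A. z i) = n}"
  by (simp add: exponents_def)

lemma complete_hom_zero:
  assumes "finite A"
  shows "complete_hom A 0 w = 1"
proof -
  have "exponents A 0 = {\<lambda>_. 0}"
    using assms by (auto simp: exponents_def fun_eq_iff sum_eq_0_iff)
  then show ?thesis
    by (simp add: complete_hom_def)
qed

lemma complete_hom_neg: "m < 0 \<Longrightarrow> complete_hom A m w = 0"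
  by (simp add: complete_hom_def exponents_def)

lemma complete_hom_empty:
  assumes "m \<noteq> 0"
  shows "complete_hom {} m w = 0"
proof -
  have "exponents {} m = {}"
    using assms by (auto simp: exponents_def)
  then show ?thesis
    by (simp add: complete_hom_def)
qed

lemma sum_exponents_zero_at:
  assumes A: "finite A" and b: "b \<in> A"
  shows "(\<Sum>z\<in>{z \<in> exponents A m. z b = 0}. \<Prod>i\<in>A. w i ^ z i) = complete_hom (A - {b}) m w"
  unfolding complete_hom_def
proof (rule sum.cong)
  show "{z \<in> exponents A m. z b = 0} = exponents (A - {b}) m"
    using A b by (auto simp: exponents_def sum.remove)
  show "(\<Prod>i\<in>A. w i ^ z i) = (\<Prod>i\<in>A - {b}. w i ^ z i)" if "z \<in> exponents (A - {b}) m" for z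
    using that A b by (simp add: exponents_def prod.remove)
qed

lemma sum_exponents_nonzero_at:
  assumes A: "finite A" and b: "b \<in> A"
  shows "(\<Sum>z\<in>{z \<in> exponents A (m + 1). z b \<noteq> 0}. \<Prod>i\<in>A. w i ^ z i) = w b * complete_hom A m w"
  unfolding complete_hom_def sum_distrib_left
proof (rule sum.reindex_bij_witness[symmetric, where j = "\<lambda>z. z(b := Suc (z b))"
      and i = "\<lambda>z. z(b := z b - 1)"])
  have sum_upd: "(\<Sum>i\<in>A. (z(b := v)) i) = v + (\<Sum>i\<in>A-{b}. z i)" for z v
    using A b by (simp add: sum.remove)
  have sum_A: "(\<Sum>i\<in>A. z i) = z b + (\<Sum>i\<in>A-{b}. z i)" for z :: "nat \<Rightarrow> nat"
    using A b by (simp add: sum.remove)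
  fix z
  show "z(b := Suc (z b)) \<in> {z \<in> exponents A (m + 1). z b \<noteq> 0}" if "z \<in> exponents A m"
    using that sum_A[of z] sum_upd[of z] b by (auto simp: exponents_def nat_add_distrib)
  show "z(b := z b - 1) \<in> exponents A m" if "z \<in> {z \<in> exponents A (m + 1). z b \<noteq> 0}"
    using that sum_A[of z] sum_upd[of z] b by (auto simp: exponents_def)
next
  fix z
  show "(z(b := Suc (z b)))(b := (z(b := Suc (z b))) b - 1) = z"
    by simp
  show "(\<Prod>i\<in>A. w i ^ (z(b := Suc (z b))) i) = w b * (\<Prod>i\<in>A. w i ^ z i)"
    using A b by (simp add: prod.remove)
  show "(z(b := z b - 1))(b := Suc ((z(b := z b - 1)) b)) = z" if "z \<in> {z \<in> exponents A (m + 1). z b \<noteq> 0}"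
    using that by auto
qed

lemma complete_hom_remove:
  assumes A: "finite A" and b: "b \<in> A"
  shows "complete_hom A (m + 1) w = complete_hom (A - {b}) (m + 1) w + w b * complete_hom A m w"
proof -
  have "complete_hom A (m + 1) w
      = (\<Sum>z\<in>{z \<in> exponents A (m + 1). z b = 0}. \<Prod>i\<in>A. w i ^ z i)
        + (\<Sum>z\<in>{z \<in> exponents A (m + 1). z b \<noteq> 0}. \<Prod>i\<in>A. w i ^ z i)"
    unfolding complete_hom_def
    by (subst sum.union_disjoint[symmetric])
      (auto intro: sum.cong finite_subset[OF _ finite_exponents[OF A]])
  then show ?thesis
    using sum_exponents_zero_at[OF A b] sum_exponents_nonzero_at[OF A b] by simp
qed

lemma lagrange_sum_Suc_remove:
  assumes A: "finite A" and b: "b \<in> A" and inj: "inj_on w A"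
  shows "lagrange_sum A (Suc k) w = lagrange_sum (A - {b}) k w + w b * lagrange_sum A k w"
proof -
  have "lagrange_sum A (Suc k) w - w b * lagrange_sum A k w
      = (\<Sum>l\<in>A. w l ^ k * (w l - w b) / (\<Prod>i\<in>A-{l}. (w l - w i)))"
    unfolding lagrange_sum_def sum_distrib_left sum_subtractf[symmetric]
    by (rule sum.cong) (auto simp: diff_divide_distrib right_diff_distrib mult.commute)
  also have "\<dots> = (\<Sum>l\<in>A-{b}. w l ^ k * (w l - w b) / (\<Prod>i\<in>A-{l}. (w l - w i)))"
    using A b by (simp add: sum.remove)
  also have "\<dots> = lagrange_sum (A - {b}) k w"
    unfolding lagrange_sum_def
  proof (rule sum.cong)
    fix l
    assume l: "l \<in> A - {b}"
    have "w l - w b \<noteq> 0"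
      using inj l b by (auto dest: inj_onD)
    moreover have "(\<Prod>i\<in>A-{l}. (w l - w i)) = (w l - w b) * (\<Prod>i\<in>A-{b}-{l}. (w l - w i))"
      using A b l by (subst prod.remove[of _ b]) (auto intro: prod.cong)
    ultimately show "w l ^ k * (w l - w b) / (\<Prod>i\<in>A-{l}. (w l - w i))
        = w l ^ k / (\<Prod>i\<in>A-{b}-{l}. (w l - w i))"
      by simp
  qed simp
  finally show ?thesis
    by simp
qed

lemma lagrange_sum_0:
  assumes "finite A" "inj_on w A"
  shows "lagrange_sum A 0 w = (if card A = 1 then 1 else 0)"
  using assms
proof (induction "card A" arbitrary: A rule: less_induct)
  case less
  consider "A = {}" | a where "A = {a}" | a b where "a \<in> A" "b \<in> A" "a \<noteq> b"
    by blast
  then show ?case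
  proof cases
    case 1
    then show ?thesis by (simp add: lagrange_sum_def)
  next
    case 2
    then show ?thesis by (simp add: lagrange_sum_def)
  next
    case 3
    note A = less.prems(1) and inj = less.prems(2)
    have "card {a, b} \<le> card A"
      using 3 A by (intro card_mono) auto
    then have two: "2 \<le> card A"
      using 3 by simp
    have removed: "lagrange_sum (A - {c}) 0 w = (if card A = 2 then 1 else 0)" if "c \<in> A" for c
    proof -
      have "inj_on w (A - {c})"
        using inj by (rule inj_on_subset) auto
      then show ?thesis
        using less.hyps[of "A - {c}"] that A two by auto
    qed
    have "w a * lagrange_sum A 0 w = w b * lagrange_sum A 0 w"
      using lagrange_sum_Suc_remove[OF A 3(1) inj, of 0] lagrange_sum_Suc_remove[OF A 3(2) inj, of 0]
        removed[OF 3(1)] removed[OF 3(2)]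
      by auto
    moreover have "w a \<noteq> w b"
      using inj 3 by (auto dest: inj_onD)
    ultimately show ?thesis
      using two by simp
  qed
qed

lemma lagrange_sum_eq_complete_hom:
  assumes "finite A" "inj_on w A"
  shows "lagrange_sum A k w = complete_hom A (int k + 1 - int (card A)) w"
  using assms
proof (induction k arbitrary: A)
  case 0
  consider "card A = 0" | "card A = 1" | "2 \<le> card A"
    by linarith
  then show ?case
  proof cases
    case 1
    then show ?thesis
      using 0 by (simp add: lagrange_sum_def complete_hom_empty)
  next
    case 2
    then show ?thesis
      using 0 by (simp add: lagrange_sum_0 complete_hom_zero)
  next
    case 3
    then show ?thesis
      using 0 by (simp add: lagrange_sum_0 complete_hom_neg)
  qed
next
  case (Suc k)
  show ?case
  proof (cases "A = {}")
    case True
    then show ?thesis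
      by (simp add: lagrange_sum_def complete_hom_empty)
  next
    case False
    then obtain b where b: "b \<in> A"
      by blast
    define m where "m = int k + 1 - int (card A)"
    have "card (A - {b}) = card A - 1" "1 \<le> card A"
      using Suc.prems(1) b by (auto simp: card_gt_0_iff Suc_le_eq)
    then have "lagrange_sum A (Suc k) w = complete_hom (A - {b}) (m + 1) w + w b * complete_hom A m w"
      using lagrange_sum_Suc_remove[OF Suc.prems(1) b Suc.prems(2)] Suc.IH[of A] Suc.IH[of "A - {b}"]
        Suc.prems by (simp add: inj_on_diff of_nat_diff m_def)
    also have "\<dots> = complete_hom A (m + 1) w"
      using complete_hom_remove[OF Suc.prems(1) b] by simp
    also have "m + 1 = int (Suc k) + 1 - int (card A)"
      by (simp add: m_def)
    finally show ?thesis .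
  qed
qed


subsection \<open>The Vandermonde product\<close>

definition pairs_below :: "nat \<Rightarrow> (nat \<times> nat) set" where
  "pairs_below s = {(i, j). i < j \<and> j < s}"

definition pairs_avoiding :: "nat \<Rightarrow> nat \<Rightarrow> (nat \<times> nat) set" where
  "pairs_avoiding s l = {(i, j) \<in> pairs_below s. i \<noteq> l \<and> j \<noteq> l}"

definition vandermonde :: "nat \<Rightarrow> (nat \<Rightarrow> real) \<Rightarrow> real" where
  "vandermonde s w = (\<Prod>(i, j)\<in>pairs_below s. (w i - w j))"

lemma finite_pairs_below: "finite (pairs_below s)"
  unfolding pairs_below_def by (rule finite_subset[of _ "{..<s} \<times> {..<s}"]) auto

lemma finite_pairs_avoiding: "finite (pairs_avoiding s l)"
  using finite_pairs_below by (rule finite_subset[rotated]) (auto simp: pairs_avoiding_def)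

lemma card_pairs_below: "card (pairs_below s) = s choose 2"
proof (induction s)
  case 0
  then show ?case by (simp add: pairs_below_def)
next
  case (Suc s)
  have "pairs_below (Suc s) = pairs_below s \<union> (\<lambda>i. (i, s)) ` {..<s}"
    by (auto simp: pairs_below_def)
  moreover have "card ((\<lambda>i. (i, s)) ` {..<s}) = s"
    by (subst card_image) (auto simp: inj_on_def)
  moreover have "pairs_below s \<inter> (\<lambda>i. (i, s)) ` {..<s} = {}"
    by (auto simp: pairs_below_def)
  ultimately have "card (pairs_below (Suc s)) = card (pairs_below s) + s"
    by (simp add: card_Un_disjoint finite_pairs_below)
  then show ?case
    using Suc by (simp add: numeral_2_eq_2)
qed

lemma hom_eta_poly_pair_product:
  assumes "finite P" "P \<subseteq> {..<s} \<times> {..<s}"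
  shows "hom_eta_poly s (card P) 0 (\<lambda>t w. \<Prod>(i, j)\<in>P. (w i - w j))"
proof -
  have "hom_eta_poly s (\<Sum>p\<in>P. 1) (\<Sum>p\<in>P. 0) (\<lambda>t w. \<Prod>p\<in>P. (w (fst p) - w (snd p)))"
    using assms(2) by (intro hom_eta_poly_prod[OF assms(1)] hom_eta_poly_diff hom_eta_poly_var) auto
  then show ?thesis
    by (simp add: case_prod_unfold)
qed

lemma hom_eta_poly_vandermonde: "hom_eta_poly s (s choose 2) 0 (\<lambda>t. vandermonde s)"
proof -
  have "hom_eta_poly s (card (pairs_below s)) 0 (\<lambda>t w. \<Prod>(i, j)\<in>pairs_below s. (w i - w j))"
    by (rule hom_eta_poly_pair_product[OF finite_pairs_below]) (auto simp: pairs_below_def)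
  then show ?thesis
    by (simp add: card_pairs_below vandermonde_def[abs_def])
qed

lemma vandermonde_nonzero: "inj_on w {..<s} \<Longrightarrow> vandermonde s w \<noteq> 0"
  unfolding vandermonde_def using finite_pairs_below
  by (subst prod_zero_iff) (auto simp: pairs_below_def dest: inj_onD)

lemma vandermonde_remove:
  assumes l: "l < s"
  shows "vandermonde s w
      = (-1) ^ l * (\<Prod>(i, j)\<in>pairs_avoiding s l. (w i - w j)) * (\<Prod>i\<in>{..<s}-{l}. (w l - w i))"
    and "s choose 2 = card (pairs_avoiding s l) + (s - 1)"
proof -
  define Pa where "Pa = (\<lambda>i. (i, l)) ` {..<l}"
  define Pb where "Pb = (\<lambda>j. (l, j)) ` {l<..<s}"
  have split: "pairs_below s = pairs_avoiding s l \<union> (Pa \<union> Pb)"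
    unfolding pairs_below_def pairs_avoiding_def Pa_def Pb_def using l by auto
  have disj: "pairs_avoiding s l \<inter> (Pa \<union> Pb) = {}" "Pa \<inter> Pb = {}"
    unfolding pairs_avoiding_def Pa_def Pb_def by auto
  have fin: "finite (pairs_avoiding s l)" "finite Pa" "finite Pb"
    using finite_pairs_avoiding unfolding Pa_def Pb_def by auto
  have inj: "inj_on (\<lambda>i. (i, l)) {..<l}" "inj_on (\<lambda>j. (l, j)) {l<..<s}"
    by (auto simp: inj_on_def)
  have "(\<Prod>(i, j)\<in>Pa. (w i - w j)) = (\<Prod>i<l. (-1) * (w l - w i))"
    unfolding Pa_def by (subst prod.reindex[OF inj(1)]) (auto intro: prod.cong)
  also have "\<dots> = (-1) ^ l * (\<Prod>i<l. (w l - w i))"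
    by (simp only: prod.distrib prod_constant card_lessThan)
  finally have Pa_prod: "(\<Prod>(i, j)\<in>Pa. (w i - w j)) = (-1) ^ l * (\<Prod>i<l. (w l - w i))" .
  have Pb_prod: "(\<Prod>(i, j)\<in>Pb. (w i - w j)) = (\<Prod>j\<in>{l<..<s}. (w l - w j))"
    unfolding Pb_def by (subst prod.reindex[OF inj(2)]) simp
  have "(\<Prod>i\<in>{..<s}-{l}. (w l - w i)) = (\<Prod>i\<in>{..<l} \<union> {l<..<s}. (w l - w i))"
    using l by (intro prod.cong) auto
  also have "\<dots> = (\<Prod>i<l. (w l - w i)) * (\<Prod>j\<in>{l<..<s}. (w l - w j))"
    by (rule prod.union_disjoint) auto
  finally have "(\<Prod>i\<in>{..<s}-{l}. (w l - w i)) = (\<Prod>i<l. (w l - w i)) * (\<Prod>j\<in>{l<..<s}. (w l - w j))" .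
  then show "vandermonde s w
      = (-1) ^ l * (\<Prod>(i, j)\<in>pairs_avoiding s l. (w i - w j)) * (\<Prod>i\<in>{..<s}-{l}. (w l - w i))"
    unfolding vandermonde_def split using fin disj Pa_prod Pb_prod
    by (simp add: prod.union_disjoint)
  have "card Pa = l" "card Pb = s - 1 - l"
    unfolding Pa_def Pb_def using inj by (simp_all add: card_image)
  then show "s choose 2 = card (pairs_avoiding s l) + (s - 1)"
    unfolding card_pairs_below[symmetric] split using fin disj l by (simp add: card_Un_disjoint)
qed


subsection \<open>Closed forms for weighted sums over compositions\<close>

locale composition_bounds =
  fixes s :: nat and y :: "nat \<Rightarrow> nat"
  assumes two_le_s: "2 \<le> s" and y_pos: "\<And>i. i < s \<Longrightarrow> 1 \<le> y i"
begin

definition y_sum :: nat where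
  "y_sum = (\<Sum>i<s. y i)"

definition compositions :: "nat \<Rightarrow> (nat \<Rightarrow> nat) set" where
  "compositions \<eta> = {x. (\<forall>i<s. y i \<le> x i) \<and> (\<forall>i\<ge>s. x i = 0) \<and> (\<Sum>i<s. x i) = \<eta>}"

definition weighted_sum :: "((nat \<Rightarrow> nat) \<Rightarrow> real) \<Rightarrow> nat \<Rightarrow> (nat \<Rightarrow> real) \<Rightarrow> real" where
  "weighted_sum g \<eta> w = (\<Sum>x\<in>compositions \<eta>. g x * (\<Prod>i<s. w i ^ x i))"

definition has_closed_form :: "((nat \<Rightarrow> nat) \<Rightarrow> real) \<Rightarrow> nat \<Rightarrow> nat \<Rightarrow> bool" where
  "has_closed_form g e N \<longleftrightarrow> (\<exists>F.
     (\<forall>l<s. hom_eta_poly s (N * (s choose 2) + y_sum - 2) e (F l)) \<and>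
     (\<forall>\<eta> w. y_sum \<le> \<eta> \<longrightarrow> inj_on w {..<s} \<longrightarrow>
        weighted_sum g \<eta> w * vandermonde s w ^ N = (\<Sum>l<s. w l ^ (\<eta> + 2 - y_sum) * F l (real \<eta>) w)))"

lemma has_closed_formE:
  assumes "has_closed_form g e N"
  obtains F where "\<And>l. l < s \<Longrightarrow> hom_eta_poly s (N * (s choose 2) + y_sum - 2) e (F l)"
    and "\<And>\<eta> w. y_sum \<le> \<eta> \<Longrightarrow> inj_on w {..<s} \<Longrightarrow>
        weighted_sum g \<eta> w * vandermonde s w ^ N = (\<Sum>l<s. w l ^ (\<eta> + 2 - y_sum) * F l (real \<eta>) w)"
  using assms unfolding has_closed_form_def by blast

lemma s_le_y_sum: "s \<le> y_sum"
  using sum_mono[of "{..<s}" "\<lambda>_. 1" y] y_pos by (simp add: y_sum_def)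

lemma weighted_sum_one:
  assumes "y_sum \<le> \<eta>"
  shows "weighted_sum (\<lambda>_. 1) \<eta> w
    = (\<Prod>i<s. w i ^ y i) * complete_hom {..<s} (int (\<eta> - y_sum)) w"
  unfolding weighted_sum_def complete_hom_def sum_distrib_left
proof (rule sum.reindex_bij_witness[symmetric, where j = "\<lambda>z i. if i < s then z i + y i else 0"
      and i = "\<lambda>x i. x i - y i"])
  fix z
  assume z: "z \<in> exponents {..<s} (int (\<eta> - y_sum))"
  then show "(\<lambda>i. (if i < s then z i + y i else 0) - y i) = z"
    by (auto simp: exponents_of_nat fun_eq_iff)
  show "(\<lambda>i. if i < s then z i + y i else 0) \<in> compositions \<eta>"
    using z assms by (auto simp: exponents_of_nat compositions_def sum.distrib y_sum_def)
  show "1 * (\<Prod>i<s. w i ^ (if i < s then z i + y i else 0))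
      = (\<Prod>i<s. w i ^ y i) * (\<Prod>i<s. w i ^ z i)"
    by (simp add: power_add prod.distrib mult.commute)
next
  fix x
  assume x: "x \<in> compositions \<eta>"
  then show "(\<lambda>i. if i < s then x i - y i + y i else 0) = x"
    by (auto simp: compositions_def fun_eq_iff)
  have "(\<Sum>i<s. x i - y i) = (\<Sum>i<s. x i) - (\<Sum>i<s. y i)"
    using x by (intro sum_subtractf_nat) (auto simp: compositions_def)
  then show "(\<lambda>i. x i - y i) \<in> exponents {..<s} (int (\<eta> - y_sum))"
    unfolding exponents_of_nat using x by (auto simp: compositions_def y_sum_def)
qed

text \<open>After the Lagrange identity, the l-th term of \<open>(\<Prod>\<^sub>i w\<^sub>i^y\<^sub>i) h\<^sub>m(w) V(w)\<close> is
  \<open>w\<^sub>l^(\<eta>+2-\<Sum>y\<^sub>i) \<cdot> coeff_one l w\<close>.\<close>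

definition coeff_one :: "nat \<Rightarrow> (nat \<Rightarrow> real) \<Rightarrow> real" where
  "coeff_one l w = (-1) ^ l * w l ^ (s + y l - 3) * (\<Prod>i\<in>{..<s}-{l}. w i ^ y i)
      * (\<Prod>(i, j)\<in>pairs_avoiding s l. (w i - w j))"

lemma hom_eta_poly_coeff_one:
  assumes l: "l < s"
  shows "hom_eta_poly s ((s choose 2) + y_sum - 2) 0 (\<lambda>t. coeff_one l)"
proof -
  have "hom_eta_poly s 0 0 (\<lambda>t w. (-1) ^ l)"
    using hom_eta_poly_const[of s "[:(-1) ^ l:]"] by simp
  moreover have "hom_eta_poly s (\<Sum>i\<in>{..<s}-{l}. y i) (\<Sum>i\<in>{..<s}-{l}. 0)
      (\<lambda>t w. \<Prod>i\<in>{..<s}-{l}. w i ^ y i)"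
    by (intro hom_eta_poly_prod hom_eta_poly_var_power) auto
  moreover have "hom_eta_poly s (card (pairs_avoiding s l)) 0
      (\<lambda>t w. \<Prod>(i, j)\<in>pairs_avoiding s l. (w i - w j))"
    by (intro hom_eta_poly_pair_product finite_pairs_avoiding)
      (auto simp: pairs_avoiding_def pairs_below_def)
  ultimately have hom: "hom_eta_poly s (0 + (s + y l - 3) + (\<Sum>i\<in>{..<s}-{l}. y i)
      + card (pairs_avoiding s l)) (0 + 0 + 0 + 0) (\<lambda>t. coeff_one l)"
    unfolding coeff_one_def[abs_def] by (intro hom_eta_poly_mult hom_eta_poly_var_power l) simp_all
  have "y_sum = y l + (\<Sum>i\<in>{..<s}-{l}. y i)"
    unfolding y_sum_def using l by (simp add: sum.remove)
  then have "0 + (s + y l - 3) + (\<Sum>i\<in>{..<s}-{l}. y i) + card (pairs_avoiding s l)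
      = (s choose 2) + y_sum - 2"
    using vandermonde_remove(2)[OF l] two_le_s y_pos[OF l] by simp
  then show ?thesis
    using hom by simp
qed

lemma weighted_sum_one_vandermonde:
  assumes \<eta>: "y_sum \<le> \<eta>" and inj: "inj_on w {..<s}"
  shows "weighted_sum (\<lambda>_. 1) \<eta> w * vandermonde s w = (\<Sum>l<s. w l ^ (\<eta> + 2 - y_sum) * coeff_one l w)"
proof -
  define k where "k = \<eta> - y_sum + s - 1"
  define P where "P l = (\<Prod>i\<in>{..<s}-{l}. (w l - w i))" for l
  have "complete_hom {..<s} (int (\<eta> - y_sum)) w = lagrange_sum {..<s} k w"
    using lagrange_sum_eq_complete_hom[of "{..<s}" w k] inj \<eta> two_le_s by (simp add: k_def)
  then have "weighted_sum (\<lambda>_. 1) \<eta> w * vandermonde s w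
      = (\<Sum>l<s. (\<Prod>i<s. w i ^ y i) * (w l ^ k / P l) * vandermonde s w)"
    by (simp add: weighted_sum_one[OF \<eta>] lagrange_sum_def P_def sum_distrib_left sum_distrib_right)
  also have "\<dots> = (\<Sum>l<s. w l ^ (\<eta> + 2 - y_sum) * coeff_one l w)"
  proof (rule sum.cong)
    fix l
    assume "l \<in> {..<s}"
    then have l: "l < s" by simp
    have "P l \<noteq> 0"
      unfolding P_def using inj l by (subst prod_zero_iff) (auto dest: inj_onD)
    moreover have "(\<Prod>i<s. w i ^ y i) = w l ^ y l * (\<Prod>i\<in>{..<s}-{l}. w i ^ y i)"
      using l by (simp add: prod.remove)
    moreover have "y l + k = (\<eta> + 2 - y_sum) + (s + y l - 3)"
      using y_pos[OF l] two_le_s \<eta> by (simp add: k_def)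
    then have "w l ^ y l * w l ^ k = w l ^ (\<eta> + 2 - y_sum) * w l ^ (s + y l - 3)"
      by (simp only: power_add[symmetric])
    ultimately show "(\<Prod>i<s. w i ^ y i) * (w l ^ k / P l) * vandermonde s w
        = w l ^ (\<eta> + 2 - y_sum) * coeff_one l w"
      by (simp add: vandermonde_remove(1)[OF l] P_def[symmetric] coeff_one_def field_simps)
  qed simp
  finally show ?thesis .
qed

lemma has_closed_form_one: "has_closed_form (\<lambda>_. 1) 0 1"
  unfolding has_closed_form_def
  using hom_eta_poly_coeff_one weighted_sum_one_vandermonde
  by (intro exI[of _ "\<lambda>l t. coeff_one l"]) simp

lemma has_closed_form_mono:
  assumes g: "has_closed_form g e N" and "e \<le> e'" "N \<le> N'"
  shows "has_closed_form g e' N'"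
proof -
  obtain F where F: "\<And>l. l < s \<Longrightarrow> hom_eta_poly s (N * (s choose 2) + y_sum - 2) e (F l)"
    and F_eq: "\<And>\<eta> w. y_sum \<le> \<eta> \<Longrightarrow> inj_on w {..<s} \<Longrightarrow>
        weighted_sum g \<eta> w * vandermonde s w ^ N = (\<Sum>l<s. w l ^ (\<eta> + 2 - y_sum) * F l (real \<eta>) w)"
    using has_closed_formE[OF g] by blast
  define F' where "F' l t w = F l t w * vandermonde s w ^ (N' - N)" for l t w
  have "hom_eta_poly s (N' * (s choose 2) + y_sum - 2) e' (F' l)" if "l < s" for l
  proof -
    have "hom_eta_poly s ((N * (s choose 2) + y_sum - 2) + (N' - N) * (s choose 2)) (e + (N' - N) * 0) (F' l)"
      unfolding F'_def
      by (intro hom_eta_poly_mult hom_eta_poly_power hom_eta_poly_vandermonde F that)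
    moreover have "(N * (s choose 2) + y_sum - 2) + (N' - N) * (s choose 2) = N' * (s choose 2) + y_sum - 2"
      using s_le_y_sum two_le_s \<open>N \<le> N'\<close> by (simp add: diff_mult_distrib)
    ultimately show ?thesis
      using \<open>e \<le> e'\<close> by (auto intro: hom_eta_poly_mono)
  qed
  moreover have "weighted_sum g \<eta> w * vandermonde s w ^ N' = (\<Sum>l<s. w l ^ (\<eta> + 2 - y_sum) * F' l (real \<eta>) w)"
    if "y_sum \<le> \<eta>" "inj_on w {..<s}" for \<eta> w
  proof -
    have "vandermonde s w ^ N' = vandermonde s w ^ N * vandermonde s w ^ (N' - N)"
      using \<open>N \<le> N'\<close> by (simp flip: power_add)
    then have "weighted_sum g \<eta> w * vandermonde s w ^ N'
        = (weighted_sum g \<eta> w * vandermonde s w ^ N) * vandermonde s w ^ (N' - N)"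
      by simp
    then show ?thesis
      unfolding F_eq[OF that] by (simp add: F'_def sum_distrib_right mult.assoc)
  qed
  ultimately show ?thesis
    unfolding has_closed_form_def by blast
qed

lemma has_closed_form_add:
  assumes "has_closed_form g e N" "has_closed_form h e N"
  shows "has_closed_form (\<lambda>x. g x + h x) e N"
proof -
  obtain F where "\<And>l. l < s \<Longrightarrow> hom_eta_poly s (N * (s choose 2) + y_sum - 2) e (F l)"
    and "\<And>\<eta> w. y_sum \<le> \<eta> \<Longrightarrow> inj_on w {..<s} \<Longrightarrow>
        weighted_sum g \<eta> w * vandermonde s w ^ N = (\<Sum>l<s. w l ^ (\<eta> + 2 - y_sum) * F l (real \<eta>) w)"
    using has_closed_formE[OF assms(1)] by blast
  moreover obtain H where "\<And>l. l < s \<Longrightarrow> hom_eta_poly s (N * (s choose 2) + y_sum - 2) e (H l)"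
    and "\<And>\<eta> w. y_sum \<le> \<eta> \<Longrightarrow> inj_on w {..<s} \<Longrightarrow>
        weighted_sum h \<eta> w * vandermonde s w ^ N = (\<Sum>l<s. w l ^ (\<eta> + 2 - y_sum) * H l (real \<eta>) w)"
    using has_closed_formE[OF assms(2)] by blast
  moreover have "weighted_sum (\<lambda>x. g x + h x) \<eta> w = weighted_sum g \<eta> w + weighted_sum h \<eta> w" for \<eta> w
    by (simp add: weighted_sum_def sum.distrib distrib_right)
  ultimately show ?thesis
    unfolding has_closed_form_def
    by (intro exI[of _ "\<lambda>l t w. F l t w + H l t w"])
      (auto simp: distrib_right distrib_left sum.distrib intro: hom_eta_poly_add)
qed

lemma has_closed_form_cmult:
  assumes "has_closed_form g e N"
  shows "has_closed_form (\<lambda>x. c * g x) e N"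
proof -
  obtain F where "\<And>l. l < s \<Longrightarrow> hom_eta_poly s (N * (s choose 2) + y_sum - 2) e (F l)"
    and "\<And>\<eta> w. y_sum \<le> \<eta> \<Longrightarrow> inj_on w {..<s} \<Longrightarrow>
        weighted_sum g \<eta> w * vandermonde s w ^ N = (\<Sum>l<s. w l ^ (\<eta> + 2 - y_sum) * F l (real \<eta>) w)"
    using has_closed_formE[OF assms] by blast
  moreover have "weighted_sum (\<lambda>x. c * g x) \<eta> w = c * weighted_sum g \<eta> w" for \<eta> w
    by (simp add: weighted_sum_def sum_distrib_left mult_ac)
  ultimately show ?thesis
    unfolding has_closed_form_def
    by (intro exI[of _ "\<lambda>l t w. c * F l t w"])
      (auto simp: sum_distrib_left mult_ac intro: hom_eta_poly_cmult)
qed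

lemma has_closed_form_sum:
  "finite I \<Longrightarrow> (\<And>i. i \<in> I \<Longrightarrow> has_closed_form (g i) e N)
    \<Longrightarrow> has_closed_form (\<lambda>x. \<Sum>i\<in>I. g i x) e N"
proof (induction I rule: finite_induct)
  case empty
  have "has_closed_form (\<lambda>_. 0) e N"
    unfolding has_closed_form_def
    by (intro exI[of _ "\<lambda>l t w. 0"]) (auto simp: weighted_sum_def hom_eta_poly_zero)
  then show ?case
    by simp
next
  case (insert a I)
  then show ?case
    using has_closed_form_add[of "g a" e N "\<lambda>x. \<Sum>i\<in>I. g i x"] by simp
qed

lemma has_euler_deriv_weighted_sum:
  assumes "k < s"
  shows "has_euler_deriv (weighted_sum g \<eta>) k (weighted_sum (\<lambda>x. real (x k) * g x) \<eta>)"
  unfolding weighted_sum_def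
  using has_euler_deriv_sum[OF has_euler_deriv_cmult[OF has_euler_deriv_prod_power[of "{..<s}" k]]] assms
  by (simp add: mult_ac)

text \<open>Both sides of the closed form agree for all \<open>w\<^sub>k\<close> in an open set, so their Euler derivatives
  agree; multiplying by the Vandermonde product and substituting the closed form again removes
  the remaining occurrence of the weighted sum.\<close>

lemma weighted_sum_mult_var_identity:
  assumes k: "k < s" and inj: "inj_on w {..<s}"
    and eq: "\<And>v. inj_on v {..<s} \<Longrightarrow>
      weighted_sum g \<eta> v * vandermonde s v ^ N = (\<Sum>l<s. v l ^ A * F l v)"
    and F': "\<And>l. l < s \<Longrightarrow> has_euler_deriv (F l) k (F' l)"
    and V': "has_euler_deriv (vandermonde s) k V'"
  shows "weighted_sum (\<lambda>x. real (x k) * g x) \<eta> w * vandermonde s w ^ Suc N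
    = (\<Sum>l<s. w l ^ A * ((if l = k then real A else 0) * F l w * vandermonde s w
        + F' l w * vandermonde s w - real N * F l w * V' w))"
proof -
  let ?S = "weighted_sum g \<eta>" and ?S' = "weighted_sum (\<lambda>x. real (x k) * g x) \<eta>"
  let ?V = "vandermonde s" and ?U = "- w ` ({..<s} - {k})"
  let ?a = "\<lambda>l. if l = k then real A else 0"
  have lhs: "has_euler_deriv (\<lambda>w. ?S w * ?V w ^ N) k
      (\<lambda>w. ?S' w * ?V w ^ N + ?S w * (real N * ?V w ^ (N - 1) * V' w))"
    by (intro has_euler_deriv_mult has_euler_deriv_power has_euler_deriv_weighted_sum k V')
  have rhs: "has_euler_deriv (\<lambda>w. \<Sum>l<s. w l ^ A * F l w) k
      (\<lambda>w. \<Sum>l<s. ?a l * w l ^ A * F l w + w l ^ A * F' l w)"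
    by (intro has_euler_deriv_sum has_euler_deriv_mult has_euler_deriv_var_power F') simp
  have "open ?U"
    by (intro open_Compl finite_imp_closed) auto
  moreover have "w k \<in> ?U"
    using inj k by (auto dest: inj_onD)
  ultimately have deriv_eq: "?S' w * ?V w ^ N + ?S w * (real N * ?V w ^ (N - 1) * V' w)
      = (\<Sum>l<s. ?a l * w l ^ A * F l w + w l ^ A * F' l w)"
  proof (rule has_euler_deriv_unique_on_open[OF lhs rhs])
    fix u
    assume "u \<in> ?U"
    then have "inj_on (w(k := u)) {..<s}"
      using inj by (auto simp: inj_on_def image_iff split: if_splits)
    then show "?S (w(k := u)) * ?V (w(k := u)) ^ N = (\<Sum>l<s. (w(k := u)) l ^ A * F l (w(k := u)))"
      by (rule eq)
  qed
  have "?S' w * ?V w ^ Suc N + real N * V' w * (?S w * ?V w ^ N)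
      = (?S' w * ?V w ^ N + ?S w * (real N * ?V w ^ (N - 1) * V' w)) * ?V w"
    by (cases N) (simp_all add: algebra_simps)
  also have "\<dots> = (\<Sum>l<s. ?a l * w l ^ A * F l w * ?V w + w l ^ A * F' l w * ?V w)"
    unfolding deriv_eq by (simp add: sum_distrib_left sum_distrib_right algebra_simps)
  finally have "?S' w * ?V w ^ Suc N
      = (\<Sum>l<s. ?a l * w l ^ A * F l w * ?V w + w l ^ A * F' l w * ?V w)
        - real N * V' w * (\<Sum>l<s. w l ^ A * F l w)"
    unfolding eq[OF inj] by linarith
  also have "\<dots> = (\<Sum>l<s. w l ^ A * (?a l * F l w * ?V w + F' l w * ?V w - real N * F l w * V' w))"
    by (simp add: sum_distrib_left sum_subtractf[symmetric] algebra_simps)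
  finally show ?thesis .
qed

lemma has_closed_form_mult_var:
  assumes k: "k < s" and g: "has_closed_form g e N"
  shows "has_closed_form (\<lambda>x. real (x k) * g x) (Suc e) (Suc N)"
proof -
  define d where "d = N * (s choose 2) + y_sum - 2"
  define V where "V = vandermonde s"
  obtain F where F: "\<And>l. l < s \<Longrightarrow> hom_eta_poly s d e (F l)"
    and F_eq: "\<And>\<eta> w. y_sum \<le> \<eta> \<Longrightarrow> inj_on w {..<s} \<Longrightarrow>
        weighted_sum g \<eta> w * V w ^ N = (\<Sum>l<s. w l ^ (\<eta> + 2 - y_sum) * F l (real \<eta>) w)"
    using has_closed_formE[OF g] unfolding d_def V_def by blast
  have "\<forall>l\<in>{..<s}. \<exists>\<Psi>. hom_eta_poly s d e \<Psi> \<and> (\<forall>t. has_euler_deriv (F l t) k (\<Psi> t))"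
    using hom_eta_poly_euler_deriv[OF F, where k = k] by blast
  then obtain F' where "\<forall>l\<in>{..<s}. hom_eta_poly s d e (F' l) \<and> (\<forall>t. has_euler_deriv (F l t) k (F' l t))"
    by (rule bchoice[THEN exE])
  then have F': "\<And>l. l < s \<Longrightarrow> hom_eta_poly s d e (F' l)"
    and F'_deriv: "\<And>l t. l < s \<Longrightarrow> has_euler_deriv (F l t) k (F' l t)"
    by auto
  obtain V' where V': "hom_eta_poly s (s choose 2) 0 V'" and V'_deriv: "\<And>t. has_euler_deriv V k (V' t)"
    using hom_eta_poly_euler_deriv[OF hom_eta_poly_vandermonde, where k = k] unfolding V_def by blast
  define c where "c l = (if l = k then [:2 - real y_sum, 1:] else 0)" for l
  define G where "G l t w = poly (c l) t * F l t w * V w + F' l t w * V w - real N * F l t w * V' t w"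
    for l t w
  have "hom_eta_poly s (Suc N * (s choose 2) + y_sum - 2) (Suc e) (G l)" if l: "l < s" for l
  proof -
    have "hom_eta_poly s 0 1 (\<lambda>t w. poly (c l) t)"
      using hom_eta_poly_const[of s "c l"] by (auto simp: c_def intro: hom_eta_poly_mono)
    then have "hom_eta_poly s (0 + d + (s choose 2)) (1 + e + 0) (\<lambda>t w. poly (c l) t * F l t w * V w)"
      by (intro hom_eta_poly_mult F l hom_eta_poly_vandermonde[of s, folded V_def])
    moreover have "hom_eta_poly s (d + (s choose 2)) (e + 0) (\<lambda>t w. F' l t w * V w)"
      by (intro hom_eta_poly_mult F' l hom_eta_poly_vandermonde[of s, folded V_def])
    moreover have "hom_eta_poly s (d + (s choose 2)) (e + 0) (\<lambda>t w. real N * F l t w * V' t w)"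
      using hom_eta_poly_cmult[OF hom_eta_poly_mult[OF F[OF l] V']] by (simp add: mult.assoc)
    ultimately have "hom_eta_poly s (d + (s choose 2)) (Suc e) (G l)"
      unfolding G_def by (intro hom_eta_poly_diff hom_eta_poly_add) (auto intro: hom_eta_poly_mono)
    moreover have "d + (s choose 2) = Suc N * (s choose 2) + y_sum - 2"
      unfolding d_def using s_le_y_sum two_le_s by simp
    ultimately show ?thesis
      by simp
  qed
  moreover have "weighted_sum (\<lambda>x. real (x k) * g x) \<eta> w * V w ^ Suc N
      = (\<Sum>l<s. w l ^ (\<eta> + 2 - y_sum) * G l (real \<eta>) w)"
    if \<eta>: "y_sum \<le> \<eta>" and inj: "inj_on w {..<s}" for \<eta> w
  proof -
    have "poly (c l) (real \<eta>) = (if l = k then real (\<eta> + 2 - y_sum) else 0)" for l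
      using \<eta> by (simp add: c_def of_nat_diff)
    then show ?thesis
      using weighted_sum_mult_var_identity[OF k inj F_eq[OF \<eta>, unfolded V_def], of "\<lambda>l. F' l (real \<eta>)" "V' (real \<eta>)"]
        F'_deriv V'_deriv
      by (simp add: G_def V_def)
  qed
  ultimately show ?thesis
    unfolding has_closed_form_def V_def by blast
qed

lemma has_closed_form_monomial:
  "(\<Sum>i<s. a i) = n \<Longrightarrow> has_closed_form (\<lambda>x. \<Prod>i<s. real (x i) ^ a i) n (Suc n)"
proof (induction n arbitrary: a)
  case 0
  then show ?case
    using has_closed_form_one by simp
next
  case (Suc n)
  then obtain k where k: "k < s" "a k \<noteq> 0"
    by (metis lessThan_iff nat.simps(3) sum.neutral)
  define a' where "a' = a(k := a k - 1)"
  have "(\<Sum>i<s. a i) = a k + (\<Sum>i\<in>{..<s}-{k}. a i)" "(\<Sum>i<s. a' i) = a' k + (\<Sum>i\<in>{..<s}-{k}. a' i)"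
    using k by (simp_all add: sum.remove)
  then have "(\<Sum>i<s. a' i) = n"
    using Suc.prems k by (simp add: a'_def)
  then have "has_closed_form (\<lambda>x. real (x k) * (\<Prod>i<s. real (x i) ^ a' i)) (Suc n) (Suc (Suc n))"
    by (intro has_closed_form_mult_var k Suc.IH)
  moreover have "real (x k) * (\<Prod>i<s. real (x i) ^ a' i) = (\<Prod>i<s. real (x i) ^ a i)" for x
    using k by (cases "a k") (simp_all add: a'_def prod.remove)
  ultimately show ?case
    by simp
qed

lemma has_closed_form_mpoly_eval:
  assumes "vars_below p s" "total_degree p \<le> q"
  shows "has_closed_form (\<lambda>x. mpoly_eval p (\<lambda>i. real (x i))) q (2 ^ q)"
proof -
  have "has_closed_form (\<lambda>x. Poly_Mapping.lookup p \<alpha> * (\<Prod>i<s. real (x i) ^ Poly_Mapping.lookup \<alpha> i)) q (2 ^ q)"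
    if \<alpha>: "\<alpha> \<in> Poly_Mapping.keys p" for \<alpha>
  proof -
    have "mono_deg \<alpha> = (\<Sum>i<s. Poly_Mapping.lookup \<alpha> i)"
      using assms(1) \<alpha> by (intro mono_deg_superset) (auto simp: vars_below_def)
    then have "has_closed_form (\<lambda>x. \<Prod>i<s. real (x i) ^ Poly_Mapping.lookup \<alpha> i)
        (mono_deg \<alpha>) (Suc (mono_deg \<alpha>))"
      by (intro has_closed_form_monomial) simp
    moreover have "mono_deg \<alpha> \<le> q"
      using mono_deg_le_total_degree[OF \<alpha>] assms(2) by simp
    moreover have "Suc q \<le> 2 ^ q"
      using less_exp[of q] by (simp only: Suc_le_eq)
    ultimately show ?thesis
      by (intro has_closed_form_cmult) (auto elim: has_closed_form_mono)
  qed
  then have "has_closed_form (\<lambda>x. \<Sum>\<alpha>\<in>Poly_Mapping.keys p.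
      Poly_Mapping.lookup p \<alpha> * (\<Prod>i<s. real (x i) ^ Poly_Mapping.lookup \<alpha> i)) q (2 ^ q)"
    by (intro has_closed_form_sum) auto
  moreover have "mono_eval \<alpha> (\<lambda>i. real (x i)) = (\<Prod>i<s. real (x i) ^ Poly_Mapping.lookup \<alpha> i)"
    if "\<alpha> \<in> Poly_Mapping.keys p" for \<alpha> x
    using assms(1) that by (intro mono_eval_superset) (auto simp: vars_below_def)
  ultimately show ?thesis
    by (simp add: mpoly_eval_def cong: sum.cong)
qed

lemma has_closed_form_imp_mpolys:
  assumes "has_closed_form g e N"
  obtains f where "\<And>l. l < s \<Longrightarrow> vars_below (f l) s
      \<and> homogeneous_of (f l) (N * (s choose 2) + y_sum - 2)
      \<and> (\<forall>\<alpha>\<in>Poly_Mapping.keys (f l). degree (Poly_Mapping.lookup (f l) \<alpha>) \<le> e)"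
    and "\<And>\<eta> w. y_sum \<le> \<eta> \<Longrightarrow> inj_on w {..<s} \<Longrightarrow> weighted_sum g \<eta> w
      = (\<Sum>l<s. w l ^ (\<eta> + 2 - y_sum) * eta_mpoly_eval (f l) (real \<eta>) w) / vandermonde s w ^ N"
proof -
  obtain F where F: "\<And>l. l < s \<Longrightarrow> hom_eta_poly s (N * (s choose 2) + y_sum - 2) e (F l)"
    and F_eq: "\<And>\<eta> w. y_sum \<le> \<eta> \<Longrightarrow> inj_on w {..<s} \<Longrightarrow>
        weighted_sum g \<eta> w * vandermonde s w ^ N = (\<Sum>l<s. w l ^ (\<eta> + 2 - y_sum) * F l (real \<eta>) w)"
    using has_closed_formE[OF assms] by blast
  have "\<forall>l\<in>{..<s}. \<exists>f. vars_below f s \<and> homogeneous_of f (N * (s choose 2) + y_sum - 2)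
      \<and> (\<forall>\<alpha>\<in>Poly_Mapping.keys f. degree (Poly_Mapping.lookup f \<alpha>) \<le> e) \<and> F l = eta_mpoly_eval f"
    using hom_eta_poly_imp_mpoly[OF F] by blast
  then obtain f where f: "\<forall>l\<in>{..<s}. vars_below (f l) s
      \<and> homogeneous_of (f l) (N * (s choose 2) + y_sum - 2)
      \<and> (\<forall>\<alpha>\<in>Poly_Mapping.keys (f l). degree (Poly_Mapping.lookup (f l) \<alpha>) \<le> e)
      \<and> F l = eta_mpoly_eval (f l)"
    by (rule bchoice[THEN exE])
  show ?thesis
  proof (rule that)
    show "vars_below (f l) s \<and> homogeneous_of (f l) (N * (s choose 2) + y_sum - 2)
      \<and> (\<forall>\<alpha>\<in>Poly_Mapping.keys (f l). degree (Poly_Mapping.lookup (f l) \<alpha>) \<le> e)" if "l < s" for l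
      using f that by blast
    fix \<eta> :: nat and w :: "nat \<Rightarrow> real"
    assume \<eta>: "y_sum \<le> \<eta>" and inj: "inj_on w {..<s}"
    have "(\<Sum>l<s. w l ^ (\<eta> + 2 - y_sum) * F l (real \<eta>) w)
        = (\<Sum>l<s. w l ^ (\<eta> + 2 - y_sum) * eta_mpoly_eval (f l) (real \<eta>) w)"
      using f by (intro sum.cong) auto
    then show "weighted_sum g \<eta> w
      = (\<Sum>l<s. w l ^ (\<eta> + 2 - y_sum) * eta_mpoly_eval (f l) (real \<eta>) w) / vandermonde s w ^ N"
      using F_eq[OF \<eta> inj] vandermonde_nonzero[OF inj] by (simp add: eq_divide_eq)
  qed
qed

end

theorem lemma3p6:
  fixes s q :: nat and y :: "nat \<Rightarrow> nat" and p :: "(nat \<Rightarrow>\<^sub>0 nat) \<Rightarrow>\<^sub>0 real"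
  assumes "s \<ge> 2"
    and "\<forall>i<s. y i \<ge> 1"
    and "vars_below p s"
    and "total_degree p = q"
  shows "\<exists>f :: nat \<Rightarrow> ((nat \<Rightarrow>\<^sub>0 nat) \<Rightarrow>\<^sub>0 real poly).
     (\<forall>l<s. vars_below (f l) s
            \<and> homogeneous_of (f l) (2 ^ q * (s choose 2) + (\<Sum>i<s. y i) - 2)
            \<and> (\<forall>\<alpha>\<in>Poly_Mapping.keys (f l). degree (Poly_Mapping.lookup (f l) \<alpha>) \<le> q))
   \<and> (\<forall>(eta::nat) (w::nat \<Rightarrow> real).
        eta \<ge> (\<Sum>i<s. y i) \<longrightarrow> inj_on w {..<s} \<longrightarrow>
        (\<Sum>x\<in>{x :: nat \<Rightarrow> nat. (\<forall>i<s. y i \<le> x i) \<and> (\<forall>i\<ge>s. x i = 0) \<and> (\<Sum>i<s. x i) = eta}.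
            mpoly_eval p (\<lambda>i. real (x i)) * (\<Prod>i<s. w i ^ x i))
        = (\<Sum>l<s. w l ^ (eta + 2 - (\<Sum>i<s. y i)) * eta_mpoly_eval (f l) (real eta) w)
          / (\<Prod>(i, j)\<in>{(i, j). i < j \<and> j < s}. (w i - w j)) ^ (2 ^ q))"
proof -
  interpret composition_bounds s y
    using assms(1,2) by unfold_locales auto
  obtain f where f: "\<And>l. l < s \<Longrightarrow> vars_below (f l) s
      \<and> homogeneous_of (f l) (2 ^ q * (s choose 2) + y_sum - 2)
      \<and> (\<forall>\<alpha>\<in>Poly_Mapping.keys (f l). degree (Poly_Mapping.lookup (f l) \<alpha>) \<le> q)"
    and f_eq: "\<And>\<eta> w. y_sum \<le> \<eta> \<Longrightarrow> inj_on w {..<s} \<Longrightarrow>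
      weighted_sum (\<lambda>x. mpoly_eval p (\<lambda>i. real (x i))) \<eta> w
      = (\<Sum>l<s. w l ^ (\<eta> + 2 - y_sum) * eta_mpoly_eval (f l) (real \<eta>) w) / vandermonde s w ^ 2 ^ q"
    using has_closed_form_imp_mpolys[OF has_closed_form_mpoly_eval[OF assms(3) eq_imp_le[OF assms(4)]]]
    by blast
  show ?thesis
    using f f_eq
    unfolding y_sum_def weighted_sum_def compositions_def vandermonde_def pairs_below_def
    by blast
qed

end
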